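(* For any BT partition sort algorithm $\mathcal{A}$ that sorts the permutation $\pi$ using $\mathcal{A}(\pi)$ accesses, there is a BST mergesort algorithm $\mathcal{B}$ that sorts the permutation $\pi^{-1}$ using $\mathcal{B}(\pi^{-1})=\mathcal{A}(\pi)$ accesses; and conversely, for any BST mergesort algorithm $\mathcal{B}$ sorting $\pi^{-1}$ using $\mathcal{B}(\pi^{-1})$ accesses there is a BT partition sort algorithm $\mathcal{A}$ sorting $\pi$ with $\mathcal{A}(\pi)=\mathcal{B}(\pi^{-1})$ accesses.
   Context: A top tree of a binary tree $T$ is a connected set of nodes containing the root. BST merge: given BSTs $T_A,T_B$ with disjoint keys, for some top trees $\tau_a$ of $T_A$, $\tau_b$ of $T_B$, it returns a BST $T$ on the union of keys such that for some top tree $\tau$ of $T$, $\tau=\tau_a\cup\tau_b$, the subtrees hanging off $\tau$ are unchanged subtrees of $T_A$ or $T_B$, and $\tau$ contains the block boundaries (in the sorted merged order, blocks are maximal contiguous runs of keys from the same input; boundaries are their first and last keys). Number of accesses: $|\tau|$. BST mergesort: on input of size 1 returns it; otherwise splits the input sequence into two contiguous nonempty parts, recursively sorts each by BST mergesort, BST-merges the results; accesses are summed over all merges. BT partition: given a binary tree (BT) $T$ (its left-to-right order of keys represents input order), for some top tree $\tau$ of $T$ returns two nonempty BTs $T_A,T_B$ with distinct keys such that for some top trees $\tau_a,\tau_b$ of them $\tau=\tau_a\cup\tau_b$, the other subtrees of $T$ appear unchanged in $T_A$ or $T_B$, $\tau$ contains the block boundaries (blocks: maximal contiguous runs in the left-to-right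 order of $T$ sent to the same output), and the left-to-right orders of $T_A$, $T_B$ are subsequences of that of $T$. Number of accesses: $|\tau|$. BT partition sort: on a BT of size one stops; otherwise BT-partitions $T$ into $T_a,T_b$ with, for some key $k$, keys of $T_a$ all $<k$ and keys of $T_b$ all $\ge k$, recurses, and appends; it sorts $\pi$ when started on a BT with left-to-right order $\pi$; accesses are summed over all partitions. *)

theory Defs
  imports Main "HOL-Library.Tree" "HOL-Library.Sublist"
begin

(* Nodes of trees with distinct keys are identified with their keys.
   A top tree of T: a connected set of nodes containing the root. *)
fun is_top :: "'a set \<Rightarrow> 'a tree \<Rightarrow> bool" where
  "is_top S Leaf = False"
| "is_top S (Node l a r) =
     (\<exists>Sl Sr. S = insert a (Sl \<union> Sr) \<and> (Sl = {} \<or> is_top Sl l) \<and> (Sr = {} \<or> is_top Sr r))"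

fun hang :: "'a set \<Rightarrow> 'a tree \<Rightarrow> 'a tree list" where
  "hang S Leaf = []"
| "hang S (Node l a r) = (if a \<in> S then hang S l @ hang S r else [Node l a r])"

(* block boundaries of the sequence xs, where P tells to which side (input/output)
   an element belongs: first and last elements of maximal runs with constant P *)
definition block_boundaries :: "'a list \<Rightarrow> ('a \<Rightarrow> bool) \<Rightarrow> 'a set" where
  "block_boundaries xs P =
     {xs ! i | i. i < length xs \<and>
        (i = 0 \<or> P (xs ! (i - 1)) \<noteq> P (xs ! i) \<or>
         i + 1 = length xs \<or> P (xs ! (i + 1)) \<noteq> P (xs ! i))}"

definition bst_merge :: "'a::linorder tree \<Rightarrow> 'a tree \<Rightarrow> 'a tree \<Rightarrow> nat \<Rightarrow> bool" where
  "bst_merge TA TB T c \<longleftrightarrow>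
     bst TA \<and> bst TB \<and> set_tree TA \<inter> set_tree TB = {} \<and>
     bst T \<and> set_tree T = set_tree TA \<union> set_tree TB \<and>
     (\<exists>\<tau>a \<tau>b \<tau>. is_top \<tau>a TA \<and> is_top \<tau>b TB \<and> is_top \<tau> T \<and> \<tau> = \<tau>a \<union> \<tau>b \<and>
        (\<forall>s \<in> set (hang \<tau> T). s \<in> subtrees TA \<or> s \<in> subtrees TB) \<and>
        block_boundaries (sorted_list_of_set (set_tree T)) (\<lambda>k. k \<in> set_tree TA) \<subseteq> \<tau> \<and>
        c = card \<tau>)"

(* bst_mergesort xs T c: some run of BST mergesort on input sequence xs
   returns T using c accesses in total *)
inductive bst_mergesort :: "'a::linorder list \<Rightarrow> 'a tree \<Rightarrow> nat \<Rightarrow> bool" where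
  single: "bst_mergesort [x] (Node Leaf x Leaf) 0"
| split: "\<lbrakk> xs \<noteq> []; ys \<noteq> []; bst_mergesort xs TA ca; bst_mergesort ys TB cb;
           bst_merge TA TB T c \<rbrakk> \<Longrightarrow> bst_mergesort (xs @ ys) T (ca + cb + c)"

definition bt_partition :: "'a tree \<Rightarrow> 'a tree \<Rightarrow> 'a tree \<Rightarrow> nat \<Rightarrow> bool" where
  "bt_partition T TA TB c \<longleftrightarrow>
     distinct (inorder T) \<and> TA \<noteq> Leaf \<and> TB \<noteq> Leaf \<and>
     distinct (inorder TA) \<and> distinct (inorder TB) \<and>
     set_tree TA \<inter> set_tree TB = {} \<and> set_tree TA \<union> set_tree TB = set_tree T \<and>
     (\<exists>\<tau> \<tau>a \<tau>b. is_top \<tau> T \<and> is_top \<tau>a TA \<and> is_top \<tau>b TB \<and> \<tau> = \<tau>a \<union> \<tau>b \<and>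
        (\<forall>s \<in> set (hang \<tau> T). s \<in> subtrees TA \<or> s \<in> subtrees TB) \<and>
        block_boundaries (inorder T) (\<lambda>k. k \<in> set_tree TA) \<subseteq> \<tau> \<and>
        subseq (inorder TA) (inorder T) \<and> subseq (inorder TB) (inorder T) \<and>
        c = card \<tau>)"

(* bt_partition_sort T c: some run of BT partition sort started on T uses c accesses *)
inductive bt_partition_sort :: "'a::linorder tree \<Rightarrow> nat \<Rightarrow> bool" where
  single: "bt_partition_sort (Node Leaf x Leaf) 0"
| part: "\<lbrakk> bt_partition T Ta Tb c;
          \<forall>x \<in> set_tree Ta. x < k; \<forall>x \<in> set_tree Tb. k \<le> x;
          bt_partition_sort Ta ca; bt_partition_sort Tb cb \<rbrakk>
         \<Longrightarrow> bt_partition_sort T (c + ca + cb)"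

(* inverse of a permutation pi of {0..<n}, given as the list [pi(0),...,pi(n-1)] *)
definition perm_inv :: "nat list \<Rightarrow> nat list" where
  "perm_inv pi = map (\<lambda>k. THE i. i < length pi \<and> pi ! i = k) [0..<length pi]"

end

theory Submission
  imports Defs
begin

(* Relabelling keys by an injective map g preserves everything the access model sees: top trees,
   the subtrees hanging off them, block boundaries and the number of accessed nodes. If g is
   increasing along the in-order sequence of T, then map_tree g T is a BST, and splitting T at a key
   threshold becomes merging two BSTs whose inputs are the two halves of the sequence of g-values
   listed in key order. For g = pi^-1, a run of BT partition sort on a tree with in-order sequence
   pi therefore becomes a run of BST mergesort on pi^-1 with the same number of accesses, and
   relabelling by pi turns mergesort runs back into partition sort runs. *)

lemma is_top_image: "is_top S t \<Longrightarrow> is_top (g ` S) (map_tree g t)"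
proof (induction t arbitrary: S)
  case (Node l a r)
  then obtain Sl Sr where "S = insert a (Sl \<union> Sr)" "Sl = {} \<or> is_top Sl l" "Sr = {} \<or> is_top Sr r"
    by auto
  with Node.IH have "g ` S = insert (g a) (g ` Sl \<union> g ` Sr)"
      "g ` Sl = {} \<or> is_top (g ` Sl) (map_tree g l)" "g ` Sr = {} \<or> is_top (g ` Sr) (map_tree g r)"
    by auto
  then show ?case
    by auto
qed simp

lemma is_top_subset: "is_top S t \<Longrightarrow> S \<subseteq> set_tree t"
  by (induction t arbitrary: S) fastforce+

lemma hang_map_tree:
  "inj_on g (set_tree t \<union> S) \<Longrightarrow> hang (g ` S) (map_tree g t) = map (map_tree g) (hang S t)"
proof (induction t)
  case (Node l a r)
  then have "g a \<in> g ` S \<longleftrightarrow> a \<in> S"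
    by (auto dest: inj_onD)
  moreover have "inj_on g (set_tree l \<union> S)" "inj_on g (set_tree r \<union> S)"
    using Node.prems by (auto intro: inj_on_subset)
  ultimately show ?case
    using Node.IH by simp
qed simp

lemma subtrees_map_tree: "s \<in> subtrees t \<Longrightarrow> map_tree g s \<in> subtrees (map_tree g t)"
  by (induction t) auto

lemma block_boundaries_map:
  assumes "\<And>x. x \<in> set xs \<Longrightarrow> Q (g x) = P x"
  shows "block_boundaries (map g xs) Q = g ` block_boundaries xs P"
proof -
  have "Q (map g xs ! i) = P (xs ! i)" if "i < length xs" for i
    using assms that by simp
  then have "(i = 0 \<or> Q (map g xs ! (i - 1)) \<noteq> Q (map g xs ! i) \<or>
        i + 1 = length xs \<or> Q (map g xs ! (i + 1)) \<noteq> Q (map g xs ! i)) \<longleftrightarrow>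
      (i = 0 \<or> P (xs ! (i - 1)) \<noteq> P (xs ! i) \<or>
        i + 1 = length xs \<or> P (xs ! (i + 1)) \<noteq> P (xs ! i))" if "i < length xs" for i
    using that by (cases "i = 0 \<or> i + 1 = length xs") (blast, simp)
  then have "{i. i < length (map g xs) \<and> (i = 0 \<or> Q (map g xs ! (i - 1)) \<noteq> Q (map g xs ! i) \<or>
        i + 1 = length (map g xs) \<or> Q (map g xs ! (i + 1)) \<noteq> Q (map g xs ! i))} =
      {i. i < length xs \<and> (i = 0 \<or> P (xs ! (i - 1)) \<noteq> P (xs ! i) \<or>
        i + 1 = length xs \<or> P (xs ! (i + 1)) \<noteq> P (xs ! i))}"
    unfolding length_map by blast
  then show ?thesis
    unfolding block_boundaries_def setcompr_eq_image image_image
    by (intro image_cong) simp_all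
qed

lemma sorted_list_of_set_Un_if_less:
  fixes A B :: "'a::linorder set"
  assumes "finite A" "finite B" "\<forall>a\<in>A. \<forall>b\<in>B. a < b"
  shows "sorted_list_of_set (A \<union> B) = sorted_list_of_set A @ sorted_list_of_set B"
proof (rule sorted_distinct_set_unique)
  show "sorted (sorted_list_of_set A @ sorted_list_of_set B)"
    using assms by (auto simp: sorted_append less_imp_le)
  show "distinct (sorted_list_of_set A @ sorted_list_of_set B)"
    using assms by fastforce
qed (use assms in auto)

lemma subseq_sorted_wrt: "subseq xs ys \<Longrightarrow> sorted_wrt R ys \<Longrightarrow> sorted_wrt R xs"
proof (induction rule: list_emb.induct)
  case (list_emb_Cons2 x y xs ys)
  then show ?case
    using list_emb_set[OF list_emb_Cons2.hyps(2)] by auto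
qed auto

lemma sorted_list_of_set_set_tree: "bst t \<Longrightarrow> sorted_list_of_set (set_tree t) = inorder t"
  by (metis bst_iff_sorted_wrt_less set_inorder sorted_list_of_set_unique strict_sorted_iff
      finite_set_tree distinct_card)

(* What BST merge and BT partition have in common, T being the merged resp. partitioned tree;
   for a BST, inorder T is the sorted key list that appears in bst_merge. *)
definition top_split :: "'a tree \<Rightarrow> 'a tree \<Rightarrow> 'a tree \<Rightarrow> nat \<Rightarrow> bool" where
  "top_split T TA TB c \<longleftrightarrow>
     (\<exists>\<tau> \<tau>a \<tau>b. is_top \<tau> T \<and> is_top \<tau>a TA \<and> is_top \<tau>b TB \<and> \<tau> = \<tau>a \<union> \<tau>b \<and>
        (\<forall>s \<in> set (hang \<tau> T). s \<in> subtrees TA \<or> s \<in> subtrees TB) \<and>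
        block_boundaries (inorder T) (\<lambda>k. k \<in> set_tree TA) \<subseteq> \<tau> \<and>
        c = card \<tau>)"

lemma top_split_map_tree:
  assumes "top_split T TA TB c" "inj_on g (set_tree T)" "set_tree TA \<subseteq> set_tree T"
  shows "top_split (map_tree g T) (map_tree g TA) (map_tree g TB) c"
proof -
  obtain \<tau> \<tau>a \<tau>b where \<tau>: "is_top \<tau> T" "is_top \<tau>a TA" "is_top \<tau>b TB" "\<tau> = \<tau>a \<union> \<tau>b"
      and hang: "\<forall>s \<in> set (hang \<tau> T). s \<in> subtrees TA \<or> s \<in> subtrees TB"
      and boundaries: "block_boundaries (inorder T) (\<lambda>k. k \<in> set_tree TA) \<subseteq> \<tau>"
      and cost: "c = card \<tau>"
    using assms(1) unfolding top_split_def by blast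
  have inj_\<tau>: "inj_on g (set_tree T \<union> \<tau>)"
    using assms(2) is_top_subset[OF \<tau>(1)] by (simp add: Un_absorb2)
  have "block_boundaries (map g (inorder T)) (\<lambda>k. k \<in> g ` set_tree TA)
      = g ` block_boundaries (inorder T) (\<lambda>k. k \<in> set_tree TA)"
    using assms(2,3) by (intro block_boundaries_map) (simp add: inj_on_image_mem_iff)
  then have "block_boundaries (inorder (map_tree g T)) (\<lambda>k. k \<in> set_tree (map_tree g TA)) \<subseteq> g ` \<tau>"
    using boundaries by (auto simp: inorder_map tree.set_map)
  moreover have "\<forall>s \<in> set (hang (g ` \<tau>) (map_tree g T)).
      s \<in> subtrees (map_tree g TA) \<or> s \<in> subtrees (map_tree g TB)"
    using hang by (auto simp: hang_map_tree[OF inj_\<tau>] intro: subtrees_map_tree)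
  moreover have "c = card (g ` \<tau>)"
    using cost inj_\<tau> by (simp add: card_image inj_on_Un)
  moreover have "g ` \<tau> = g ` \<tau>a \<union> g ` \<tau>b"
    using \<tau>(4) by (simp add: image_Un)
  ultimately show ?thesis
    unfolding top_split_def using is_top_image \<tau>(1-3) by blast
qed

lemma bst_merge_iff:
  "bst_merge TA TB T c \<longleftrightarrow>
     bst TA \<and> bst TB \<and> set_tree TA \<inter> set_tree TB = {} \<and>
     bst T \<and> set_tree T = set_tree TA \<union> set_tree TB \<and> top_split T TA TB c"
  unfolding bst_merge_def top_split_def
  by (cases "bst T"; simp add: sorted_list_of_set_set_tree; blast)

lemma bt_partition_iff:
  "bt_partition T TA TB c \<longleftrightarrow>
     distinct (inorder T) \<and> TA \<noteq> Leaf \<and> TB \<noteq> Leaf \<and>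
     distinct (inorder TA) \<and> distinct (inorder TB) \<and>
     set_tree TA \<inter> set_tree TB = {} \<and> set_tree TA \<union> set_tree TB = set_tree T \<and>
     subseq (inorder TA) (inorder T) \<and> subseq (inorder TB) (inorder T) \<and>
     top_split T TA TB c"
  unfolding bt_partition_def top_split_def by blast

lemma bst_mergesort_bst_set_tree: "bst_mergesort xs T c \<Longrightarrow> bst T \<and> set_tree T = set xs"
  by (induction rule: bst_mergesort.induct) (auto simp: bst_merge_def)

lemma bst_mergesort_if_bt_partition_sort:
  "bt_partition_sort T c \<Longrightarrow> sorted_wrt (<) (map g (inorder T)) \<Longrightarrow>
   bst_mergesort (map g (sorted_list_of_set (set_tree T))) (map_tree g T) c"
proof (induction arbitrary: g rule: bt_partition_sort.induct)
  case (single x)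
  then show ?case
    using bst_mergesort.single by simp
next
  case (part T Ta Tb c k ca cb)
  then have partition: "Ta \<noteq> Leaf" "Tb \<noteq> Leaf"
      "set_tree Ta \<inter> set_tree Tb = {}" "set_tree Ta \<union> set_tree Tb = set_tree T"
      "subseq (inorder Ta) (inorder T)" "subseq (inorder Tb) (inorder T)" "top_split T Ta Tb c"
    by (simp_all add: bt_partition_iff)
  have sorted: "sorted_wrt (<) (map g (inorder T))"
    by fact
  then have sorted_a: "sorted_wrt (<) (map g (inorder Ta))"
    and sorted_b: "sorted_wrt (<) (map g (inorder Tb))"
    using partition(5,6) by (blast intro: subseq_sorted_wrt subseq_map)+
  have inj: "inj_on g (set_tree T)"
    using sorted by (metis distinct_map set_inorder strict_sorted_iff)
  have "bst_merge (map_tree g Ta) (map_tree g Tb) (map_tree g T) c"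
    unfolding bst_merge_iff
  proof (intro conjI)
    show "bst (map_tree g Ta)" "bst (map_tree g Tb)" "bst (map_tree g T)"
      using sorted sorted_a sorted_b by (simp_all add: bst_iff_sorted_wrt_less inorder_map)
    show "set_tree (map_tree g Ta) \<inter> set_tree (map_tree g Tb) = {}"
      using inj partition(3,4) by (auto simp: tree.set_map dest: inj_onD)
    show "set_tree (map_tree g T) = set_tree (map_tree g Ta) \<union> set_tree (map_tree g Tb)"
      using partition(4) by (auto simp: tree.set_map)
    show "top_split (map_tree g T) (map_tree g Ta) (map_tree g Tb) c"
      using partition(4,7) inj by (blast intro: top_split_map_tree)
  qed
  moreover have "sorted_list_of_set (set_tree Ta) \<noteq> []" "sorted_list_of_set (set_tree Tb) \<noteq> []"
    using partition(1,2) by (auto simp: neq_Leaf_iff)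
  ultimately have "bst_mergesort (map g (sorted_list_of_set (set_tree Ta)) @
      map g (sorted_list_of_set (set_tree Tb))) (map_tree g T) (ca + cb + c)"
    using part.IH sorted_a sorted_b by (intro bst_mergesort.split) simp_all
  moreover have "sorted_list_of_set (set_tree T) =
      sorted_list_of_set (set_tree Ta) @ sorted_list_of_set (set_tree Tb)"
    using part.hyps(2,3) partition(4) sorted_list_of_set_Un_if_less[of "set_tree Ta" "set_tree Tb"]
    by force
  ultimately show ?case
    by (simp add: ac_simps)
qed

lemma bt_partition_sort_if_bst_mergesort:
  "bst_mergesort xs T c \<Longrightarrow> sorted_wrt (<) (map h xs) \<Longrightarrow> bt_partition_sort (map_tree h T) c"
proof (induction arbitrary: h rule: bst_mergesort.induct)
  case (single x)
  then show ?case
    using bt_partition_sort.single by simp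
next
  case (split xs ys TA ca TB cb T c)
  then have merge: "bst TA" "bst TB" "bst T" "set_tree TA \<inter> set_tree TB = {}"
      "set_tree T = set_tree TA \<union> set_tree TB" "top_split T TA TB c"
    by (simp_all add: bst_merge_iff)
  have sets: "set_tree TA = set xs" "set_tree TB = set ys"
    using split.hyps(3,4) by (simp_all add: bst_mergesort_bst_set_tree)
  have sorted: "sorted_wrt (<) (map h (xs @ ys))"
    by fact
  then have sorted_x: "sorted_wrt (<) (map h xs)" and sorted_y: "sorted_wrt (<) (map h ys)"
    and less: "\<forall>a \<in> set xs. \<forall>b \<in> set ys. h a < h b"
    by (auto simp: sorted_wrt_append)
  have inj: "inj_on h (set_tree T)"
    using sorted merge(5) sets by (metis distinct_map set_append strict_sorted_iff)
  have subseq: "subseq (inorder S) (inorder T)" if "S \<in> {TA, TB}" for S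
    using that merge by (intro sorted_subset_imp_subseq)
      (auto simp: bst_iff_sorted_wrt_less strict_sorted_iff)
  have "bt_partition (map_tree h T) (map_tree h TA) (map_tree h TB) c"
    unfolding bt_partition_iff
  proof (intro conjI)
    show "distinct (inorder (map_tree h T))" "distinct (inorder (map_tree h TA))"
      "distinct (inorder (map_tree h TB))"
      using inj merge by (auto simp: inorder_map distinct_map bst_iff_sorted_wrt_less
          strict_sorted_iff intro: inj_on_subset)
    show "map_tree h TA \<noteq> Leaf" "map_tree h TB \<noteq> Leaf"
      using sets split.hyps(1,2) by auto
    show "set_tree (map_tree h TA) \<inter> set_tree (map_tree h TB) = {}"
      using sets less by (force simp: tree.set_map)
    show "set_tree (map_tree h TA) \<union> set_tree (map_tree h TB) = set_tree (map_tree h T)"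
      using merge(5) by (auto simp: tree.set_map)
    show "subseq (inorder (map_tree h TA)) (inorder (map_tree h T))"
      "subseq (inorder (map_tree h TB)) (inorder (map_tree h T))"
      using subseq by (simp_all add: inorder_map subseq_map)
    show "top_split (map_tree h T) (map_tree h TA) (map_tree h TB) c"
      using merge(5,6) inj by (blast intro: top_split_map_tree)
  qed
  moreover have "\<forall>x \<in> set_tree (map_tree h TA). x < h (hd ys)"
    and "\<forall>x \<in> set_tree (map_tree h TB). h (hd ys) \<le> x"
    using sets less sorted_y split.hyps(2)
    by (auto simp: tree.set_map neq_Nil_conv less_imp_le)
  ultimately have "bt_partition_sort (map_tree h T) (c + ca + cb)"
    using split.IH sorted_x sorted_y by (blast intro: bt_partition_sort.part)
  then show ?case
    by (simp add: ac_simps)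
qed

lemma length_perm_inv [simp]: "length (perm_inv pi) = length pi"
  by (simp add: perm_inv_def)

lemma perm_inv_inverse:
  assumes "distinct pi" "set pi = {0..<length pi}"
  shows "map ((!) (perm_inv pi)) pi = [0..<length pi]"
    and "map ((!) pi) (perm_inv pi) = [0..<length pi]"
proof -
  have the_index: "(THE i. i < length pi \<and> pi ! i = pi ! j) = j" if "j < length pi" for j
    using that assms(1) by (intro the_equality) (auto simp: nth_eq_iff_index_eq)
  have perm_inv_nth: "perm_inv pi ! (pi ! j) = j" if "j < length pi" for j
  proof -
    have "pi ! j < length pi"
      using that assms(2) nth_mem by fastforce
    then show ?thesis
      using that by (simp add: perm_inv_def the_index)
  qed
  then show "map ((!) (perm_inv pi)) pi = [0..<length pi]"
    by (intro nth_equalityI) simp_all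
  have "pi ! (perm_inv pi ! k) = k" if "k < length pi" for k
  proof -
    have "k \<in> set pi"
      using that assms(2) by simp
    then obtain j where "j < length pi" "pi ! j = k"
      by (auto simp: in_set_conv_nth)
    then show ?thesis
      using perm_inv_nth by metis
  qed
  then show "map ((!) pi) (perm_inv pi) = [0..<length pi]"
    by (intro nth_equalityI) (simp_all add: perm_inv_def)
qed

lemma set_perm_inv:
  assumes "distinct pi" "set pi = {0..<length pi}"
  shows "set (perm_inv pi) = {0..<length pi}"
proof -
  have "set (perm_inv pi) = (!) (perm_inv pi) ` set pi"
    using assms(2) by (auto simp: set_conv_nth)
  also have "\<dots> = {0..<length pi}"
    using perm_inv_inverse(1)[OF assms] by (metis set_map set_upt)
  finally show ?thesis .
qed

theorem lemma2:
  fixes pi :: "nat list" and c :: nat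
  assumes "distinct pi" and "set pi = {0..<length pi}"
  shows "((\<exists>T. inorder T = pi \<and> bt_partition_sort T c) \<longrightarrow>
            (\<exists>T'. bst_mergesort (perm_inv pi) T' c))
       \<and> ((\<exists>T'. bst_mergesort (perm_inv pi) T' c) \<longrightarrow>
            (\<exists>T. inorder T = pi \<and> bt_partition_sort T c))"
proof (intro conjI impI)
  assume "\<exists>T. inorder T = pi \<and> bt_partition_sort T c"
  then obtain T where T: "inorder T = pi" "bt_partition_sort T c"
    by blast
  then have "sorted_list_of_set (set_tree T) = [0..<length pi]"
    using assms(2) by (simp flip: set_inorder)
  then have "bst_mergesort (map ((!) (perm_inv pi)) [0..<length pi]) (map_tree ((!) (perm_inv pi)) T) c"
    using bst_mergesort_if_bt_partition_sort[OF T(2), of "(!) (perm_inv pi)"] T(1)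
      perm_inv_inverse(1)[OF assms]
    by simp
  then show "\<exists>T'. bst_mergesort (perm_inv pi) T' c"
    by (metis length_perm_inv map_nth)
next
  assume "\<exists>T'. bst_mergesort (perm_inv pi) T' c"
  then obtain T' where T': "bst_mergesort (perm_inv pi) T' c"
    by blast
  then have "inorder T' = [0..<length pi]"
    using bst_mergesort_bst_set_tree set_perm_inv[OF assms]
    by (metis sorted_list_of_set_range sorted_list_of_set_set_tree)
  then have "inorder (map_tree ((!) pi) T') = pi"
    by (simp add: inorder_map map_nth)
  moreover have "bt_partition_sort (map_tree ((!) pi) T') c"
    using bt_partition_sort_if_bst_mergesort[OF T', of "(!) pi"] perm_inv_inverse(2)[OF assms] by simp
  ultimately show "\<exists>T. inorder T = pi \<and> bt_partition_sort T c"
    by blast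
qed

end
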